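(* Let $\mathcal M=\langle\mathcal C,\mathcal S,\{\mathcal R_i\}_{i\in I}\rangle$ be a model and $\mathcal G\in\mathcal M$. There exists a set $\mathcal X_{\mathcal G}\subseteq\mathcal T'^{<\omega}$ such that $\mathcal G=\mathcal X_{\mathcal G}\leadsto\mathcal S$.
   Context: $\lambda\mu$-terms: $t::= x\mid \lambda x.t\mid (t\;t)\mid \mu a.t\mid (a\;t)$ over disjoint infinite sets of $\lambda$-variables and $\mu$-variables; reduction $(\lambda x.u\;v)\triangleright u[x:=v]$, $(\mu a.u\;v)\triangleright\mu a.u[a:=^*v]$ ($u[a:=^*v]$ replaces each subterm $(a\;w)$ by $(a\;(w\;v))$), $\triangleright^*$ its reflexive transitive compatible closure. $\mathcal S$ is saturated if $v\triangleright^*u\in\mathcal S$ implies $v\in\mathcal S$; for an infinite set $\mathcal C$ of $\mu$-variables, $\mathcal S$ is $\mathcal C$-saturated if saturated and $t\in\mathcal S$ implies $\mu a.t,(a\;t)\in\mathcal S$ for all $a\in\mathcal C$. $\mathcal K\leadsto\mathcal L=\{t:(t\;u)\in\mathcal L\ \forall u\in\mathcal K\}$. $\mathcal T'$ is the set of terms together with the $\mu$-variables; for $\pi\in\mathcal T'^{<\omega}$ (finite sequences): $(t\;\emptyset)=t$, $(t\;u\pi')=((t\;u)\;\pi')$ for a term $u$, $(t\;a\pi')=((a\;t)\;\pi')$ for a $\mu$-variable $a$; for $\mathcal X\subseteq\mathcal T'^{<\omega}$, $\mathcal X\leadsto\mathcal S=\{t:(t\;\pi)\in\mathcal S\ \forall\pi\in\mathcal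 X\}$. A model $\mathcal M=\langle\mathcal C,\mathcal S,\{\mathcal R_i\}_{i\in I}\rangle$: $\mathcal S$ is $\mathcal C$-saturated, each $\mathcal R_i=\mathcal X_i\leadsto\mathcal S$ for some $\mathcal X_i\subseteq\mathcal T'^{<\omega}$, and $\mathcal M$ is the smallest set of sets of terms containing $\mathcal S$ and all $\mathcal R_i$ and closed under $\leadsto$. *)

theory Defs
  imports Main
begin

text \<open>Free lambda-variables and free mu-variables are natural numbers, kept disjoint by the
constructors.  Bound variables are de Bruijn indices; lambda- and mu-binders are counted
separately.  Terms are the locally closed raw terms (this is the standard way of
representing terms modulo alpha-conversion).\<close>

datatype trm =
    FV nat
  | BV nat
  | Lam trm
  | App trm trm
  | Mu trm
  | FNm nat trm       \<comment> \<open>(a t) with a free mu-variable a\<close>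
  | BNm nat trm       \<comment> \<open>(k t) with a bound mu-variable (index)\<close>

fun lc :: "nat \<Rightarrow> nat \<Rightarrow> trm \<Rightarrow> bool" where
  "lc i j (FV x) = True"
| "lc i j (BV n) = (n < i)"
| "lc i j (Lam t) = lc (Suc i) j t"
| "lc i j (App t u) = (lc i j t \<and> lc i j u)"
| "lc i j (Mu t) = lc i (Suc j) t"
| "lc i j (FNm a t) = lc i j t"
| "lc i j (BNm k t) = (k < j \<and> lc i j t)"

definition terms :: "trm set" where
  "terms = {t. lc 0 0 t}"

fun open_l :: "nat \<Rightarrow> trm \<Rightarrow> trm \<Rightarrow> trm" where
  "open_l k v (FV x) = FV x"
| "open_l k v (BV n) = (if n = k then v else BV n)"
| "open_l k v (Lam t) = Lam (open_l (Suc k) v t)"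
| "open_l k v (App t u) = App (open_l k v t) (open_l k v u)"
| "open_l k v (Mu t) = Mu (open_l k v t)"
| "open_l k v (FNm a t) = FNm a (open_l k v t)"
| "open_l k v (BNm n t) = BNm n (open_l k v t)"

fun close_l :: "nat \<Rightarrow> nat \<Rightarrow> trm \<Rightarrow> trm" where
  "close_l k x (FV y) = (if y = x then BV k else FV y)"
| "close_l k x (BV n) = BV n"
| "close_l k x (Lam t) = Lam (close_l (Suc k) x t)"
| "close_l k x (App t u) = App (close_l k x t) (close_l k x u)"
| "close_l k x (Mu t) = Mu (close_l k x t)"
| "close_l k x (FNm a t) = FNm a (close_l k x t)"
| "close_l k x (BNm n t) = BNm n (close_l k x t)"

fun close_m :: "nat \<Rightarrow> nat \<Rightarrow> trm \<Rightarrow> trm" where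
  "close_m k a (FV y) = FV y"
| "close_m k a (BV n) = BV n"
| "close_m k a (Lam t) = Lam (close_m k a t)"
| "close_m k a (App t u) = App (close_m k a t) (close_m k a u)"
| "close_m k a (Mu t) = Mu (close_m (Suc k) a t)"
| "close_m k a (FNm b t) = (if b = a then BNm k (close_m k a t) else FNm b (close_m k a t))"
| "close_m k a (BNm n t) = BNm n (close_m k a t)"

definition lam :: "nat \<Rightarrow> trm \<Rightarrow> trm" where
  "lam x t = Lam (close_l 0 x t)"

definition mu :: "nat \<Rightarrow> trm \<Rightarrow> trm" where
  "mu a t = Mu (close_m 0 a t)"

text \<open>Structural substitution \<open>u[a:=* v]\<close> for the mu-variable bound at index k:
every subterm \<open>(a w)\<close> becomes \<open>(a (w[a:=*v] v))\<close>.\<close>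
fun sstruct :: "nat \<Rightarrow> trm \<Rightarrow> trm \<Rightarrow> trm" where
  "sstruct k v (FV y) = FV y"
| "sstruct k v (BV n) = BV n"
| "sstruct k v (Lam t) = Lam (sstruct k v t)"
| "sstruct k v (App t u) = App (sstruct k v t) (sstruct k v u)"
| "sstruct k v (Mu t) = Mu (sstruct (Suc k) v t)"
| "sstruct k v (FNm b t) = FNm b (sstruct k v t)"
| "sstruct k v (BNm n t) =
     (if n = k then BNm n (App (sstruct k v t) v) else BNm n (sstruct k v t))"

inductive red1 :: "trm \<Rightarrow> trm \<Rightarrow> bool" where
  beta: "App (Lam u) v \<in> terms \<Longrightarrow> red1 (App (Lam u) v) (open_l 0 v u)"
| mu_red: "App (Mu u) v \<in> terms \<Longrightarrow> red1 (App (Mu u) v) (Mu (sstruct 0 v u))"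
| app_l: "red1 t t' \<Longrightarrow> u \<in> terms \<Longrightarrow> red1 (App t u) (App t' u)"
| app_r: "red1 u u' \<Longrightarrow> t \<in> terms \<Longrightarrow> red1 (App t u) (App t u')"
| lam_c: "red1 t t' \<Longrightarrow> red1 (lam x t) (lam x t')"
| mu_c: "red1 t t' \<Longrightarrow> red1 (mu a t) (mu a t')"
| name_c: "red1 t t' \<Longrightarrow> red1 (FNm a t) (FNm a t')"

abbreviation red :: "trm \<Rightarrow> trm \<Rightarrow> bool" where
  "red \<equiv> red1\<^sup>*\<^sup>*"

definition saturated :: "trm set \<Rightarrow> bool" where
  "saturated S \<longleftrightarrow> S \<subseteq> terms \<and> (\<forall>u v. v \<in> terms \<longrightarrow> red v u \<longrightarrow> u \<in> S \<longrightarrow> v \<in> S)"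

definition C_saturated :: "nat set \<Rightarrow> trm set \<Rightarrow> bool" where
  "C_saturated C S \<longleftrightarrow> saturated S \<and> (\<forall>t\<in>S. \<forall>a\<in>C. mu a t \<in> S \<and> FNm a t \<in> S)"

definition arrow :: "trm set \<Rightarrow> trm set \<Rightarrow> trm set" (infixr "\<leadsto>" 55) where
  "K \<leadsto> L = {t \<in> terms. \<forall>u\<in>K. App t u \<in> L}"

datatype telem = TmE trm | MvE nat

definition Tprime :: "telem set" where
  "Tprime = {TmE t | t. t \<in> terms} \<union> range MvE"

fun app_seq :: "trm \<Rightarrow> telem list \<Rightarrow> trm" where
  "app_seq t [] = t"
| "app_seq t (TmE u # \<pi>) = app_seq (App t u) \<pi>"
| "app_seq t (MvE a # \<pi>) = app_seq (FNm a t) \<pi>"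

definition arrowX :: "telem list set \<Rightarrow> trm set \<Rightarrow> trm set" where
  "arrowX X S = {t \<in> terms. \<forall>\<pi>\<in>X. app_seq t \<pi> \<in> S}"

definition is_model :: "nat set \<Rightarrow> trm set \<Rightarrow> 'i set \<Rightarrow> ('i \<Rightarrow> trm set) \<Rightarrow> bool" where
  "is_model C S I R \<longleftrightarrow> infinite C \<and> C_saturated C S \<and>
     (\<forall>i\<in>I. \<exists>X. X \<subseteq> lists Tprime \<and> R i = arrowX X S)"

inductive_set model_sets :: "trm set \<Rightarrow> 'i set \<Rightarrow> ('i \<Rightarrow> trm set) \<Rightarrow> trm set set"
  for S I R where
  base: "S \<in> model_sets S I R"
| rel: "i \<in> I \<Longrightarrow> R i \<in> model_sets S I R"
| arr: "K \<in> model_sets S I R \<Longrightarrow> L \<in> model_sets S I R \<Longrightarrow> (K \<leadsto> L) \<in> model_sets S I R"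

end

theory Submission
  imports Defs
begin

text \<open>Every set of the model is of the form \<open>\<X> \<leadsto> \<S>\<close>, by induction on its construction:
\<open>\<S> = {\<emptyset>} \<leadsto> \<S>\<close>, the \<open>\<R>\<^sub>i\<close> are of this form by definition, and
\<open>\<K> \<leadsto> (\<X> \<leadsto> \<S>) = {u\<pi> | u \<in> \<K>, \<pi> \<in> \<X>} \<leadsto> \<S>\<close> because \<open>(t u\<pi>) = ((t u) \<pi>)\<close>.\<close>

lemma arrowX_subset_terms: "arrowX X S \<subseteq> terms"
  by (auto simp: arrowX_def)

lemma arrowX_empty_stack:
  assumes "S \<subseteq> terms"
  shows "arrowX {[]} S = S"
  using assms by (auto simp: arrowX_def)

lemma Cons_stacks_in_lists_Tprime:
  assumes "K \<subseteq> terms" "X \<subseteq> lists Tprime"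
  shows "{TmE u # \<pi> | u \<pi>. u \<in> K \<and> \<pi> \<in> X} \<subseteq> lists Tprime"
proof
  fix s assume "s \<in> {TmE u # \<pi> | u \<pi>. u \<in> K \<and> \<pi> \<in> X}"
  then obtain u \<pi> where s: "s = TmE u # \<pi>" "u \<in> K" "\<pi> \<in> X" by blast
  have "TmE u \<in> Tprime" using s(2) assms(1) by (auto simp: Tprime_def)
  moreover have "\<pi> \<in> lists Tprime" using s(3) assms(2) by blast
  ultimately show "s \<in> lists Tprime" using s(1) by simp
qed

lemma arrow_arrowX:
  assumes "K \<subseteq> terms"
  shows "(K \<leadsto> arrowX X S) = arrowX {TmE u # \<pi> | u \<pi>. u \<in> K \<and> \<pi> \<in> X} S"
proof
  show "(K \<leadsto> arrowX X S) \<subseteq> arrowX {TmE u # \<pi> | u \<pi>. u \<in> K \<and> \<pi> \<in> X} S"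
    by (auto simp: arrow_def arrowX_def)
  show "arrowX {TmE u # \<pi> | u \<pi>. u \<in> K \<and> \<pi> \<in> X} S \<subseteq> (K \<leadsto> arrowX X S)"
  proof
    fix t assume t: "t \<in> arrowX {TmE u # \<pi> | u \<pi>. u \<in> K \<and> \<pi> \<in> X} S"
    have "App t u \<in> arrowX X S" if "u \<in> K" for u
    proof -
      have "App t u \<in> terms"
        using t \<open>u \<in> K\<close> assms by (auto simp: arrowX_def terms_def)
      moreover have "app_seq (App t u) \<pi> \<in> S" if "\<pi> \<in> X" for \<pi>
      proof -
        have "TmE u # \<pi> \<in> {TmE u # \<pi> | u \<pi>. u \<in> K \<and> \<pi> \<in> X}"
          using \<open>u \<in> K\<close> \<open>\<pi> \<in> X\<close> by blast
        with t have "app_seq t (TmE u # \<pi>) \<in> S" unfolding arrowX_def by blast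
        then show ?thesis by simp
      qed
      ultimately show ?thesis by (simp add: arrowX_def)
    qed
    with t show "t \<in> (K \<leadsto> arrowX X S)" by (auto simp: arrow_def arrowX_def)
  qed
qed

theorem mainTheorem6:
  fixes C :: "nat set" and S :: "trm set" and I :: "'i set" and R :: "'i \<Rightarrow> trm set"
    and G :: "trm set"
  assumes "is_model C S I R"
    and "G \<in> model_sets S I R"
  shows "\<exists>X. X \<subseteq> lists Tprime \<and> G = arrowX X S"
  using assms(2)
proof induction
  case base
  have "S \<subseteq> terms"
    using assms(1) by (simp add: is_model_def C_saturated_def saturated_def)
  then have "arrowX {[]} S = S" by (rule arrowX_empty_stack)
  then show ?case by (intro exI[of _ "{[]}"]) simp
next
  case (rel i)
  then show ?case using assms(1) by (auto simp: is_model_def)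
next
  case (arr K L)
  obtain XK where K: "K = arrowX XK S"
    using arr.IH(1) by blast
  obtain XL where L: "L = arrowX XL S" "XL \<subseteq> lists Tprime"
    using arr.IH(2) by blast
  let ?Y = "{TmE u # \<pi> | u \<pi>. u \<in> K \<and> \<pi> \<in> XL}"
  have "K \<subseteq> terms" using K arrowX_subset_terms by simp
  then have "(K \<leadsto> L) = arrowX ?Y S" and "?Y \<subseteq> lists Tprime"
    using L arrow_arrowX Cons_stacks_in_lists_Tprime by simp_all
  then show ?case by (intro exI[of _ ?Y] conjI)
qed

end
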